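(* Let $G=(V,E,L)$ be a hypergraph with loops, $L=L^-\cup L^+$, and let $G'=(V,E,L^+)$ be obtained by removing all minus loops. Then $$\mathrm{PP}(G)=\Big\{z\in\mathbb{R}^{V\cup E\cup L}: (z_p)_{p\in V\cup E\cup L^+}\in\mathrm{PP}(G'),\ z_{ii}\le z_i,\ z_i\in[0,1]\ \forall\{i,i\}\in L^-\Big\}.$$
   Context: A hypergraph with loops is $G=(V,E,L)$: $V$ a finite node set, $E$ a set of subsets of $V$ of cardinality at least two, $L$ a set of loops $\{i,i\}$, $i\in V$, partitioned as $L=L^-\cup L^+$ (minus/plus loops). $\mathrm{PP}(G):=\mathrm{conv}\{z\in\mathbb{R}^{V\cup E\cup L}: z_{ii}\ge z_i^2\ \forall\{i,i\}\in L^+,\ z_{ii}\le z_i^2\ \forall \{i,i\}\in L^-,\ z_e=\prod_{i\in e}z_i\ \forall e\in E,\ z_i\in[0,1]\ \forall i\in V\}$. *)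

theory Defs
  imports "HOL-Analysis.Analysis" "HOL-Library.Function_Algebras"
begin

text \<open>Real-valued functions on an arbitrary index type form a real vector space
  (pointwise operations), so that the library's convex hull applies to them.\<close>

instantiation "fun" :: (type, real_vector) real_vector
begin
definition scaleR_fun :: "real \<Rightarrow> ('a \<Rightarrow> 'b) \<Rightarrow> 'a \<Rightarrow> 'b" where
  "scaleR_fun r f = (\<lambda>x. r *\<^sub>R f x)"
instance
  by standard (auto simp: scaleR_fun_def fun_eq_iff scaleR_add_right scaleR_add_left)
end

text \<open>Coordinates of R^(V \<union> E \<union> L): a node i, an edge e, or a loop {i,i}
  (identified with its node i).\<close>
datatype 'v coord = Nd 'v | Ed "'v set" | Lp 'v

definition coords :: "'v set \<Rightarrow> 'v set set \<Rightarrow> 'v set \<Rightarrow> 'v coord set" where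
  "coords V E L = Nd ` V \<union> Ed ` E \<union> Lp ` L"

definition hypergraph_loops :: "'v set \<Rightarrow> 'v set set \<Rightarrow> 'v set \<Rightarrow> 'v set \<Rightarrow> bool" where
  "hypergraph_loops V E Lminus Lplus \<longleftrightarrow>
     finite V \<and> (\<forall>e\<in>E. e \<subseteq> V \<and> card e \<ge> 2) \<and>
     Lminus \<subseteq> V \<and> Lplus \<subseteq> V \<and> Lminus \<inter> Lplus = {}"

text \<open>Points of R^(V \<union> E \<union> L) are functions coord \<Rightarrow> real vanishing outside the
  coordinate set.\<close>
definition PP_points :: "'v set \<Rightarrow> 'v set set \<Rightarrow> 'v set \<Rightarrow> 'v set \<Rightarrow> ('v coord \<Rightarrow> real) set" where
  "PP_points V E Lminus Lplus =
     {z. (\<forall>p. p \<notin> coords V E (Lminus \<union> Lplus) \<longrightarrow> z p = 0) \<and>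
         (\<forall>i\<in>Lplus. z (Lp i) \<ge> (z (Nd i))\<^sup>2) \<and>
         (\<forall>i\<in>Lminus. z (Lp i) \<le> (z (Nd i))\<^sup>2) \<and>
         (\<forall>e\<in>E. z (Ed e) = (\<Prod>i\<in>e. z (Nd i))) \<and>
         (\<forall>i\<in>V. 0 \<le> z (Nd i) \<and> z (Nd i) \<le> 1)}"

definition PP :: "'v set \<Rightarrow> 'v set set \<Rightarrow> 'v set \<Rightarrow> 'v set \<Rightarrow> ('v coord \<Rightarrow> real) set" where
  "PP V E Lminus Lplus = convex hull (PP_points V E Lminus Lplus)"

definition restrict_coords :: "'a set \<Rightarrow> ('a \<Rightarrow> real) \<Rightarrow> 'a \<Rightarrow> real" where
  "restrict_coords C z = (\<lambda>p. if p \<in> C then z p else 0)"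

end

theory Submission
  imports Defs
begin

(* A point of PP(G') depends affinely on each single node value z_i once the loop values
   are fixed, because the edge monomials are multilinear. Hence for nodes without plus loop
   each coordinate z_i can be pushed to {0, 1}: PP(G') is the convex hull of its points that
   are binary on the minus-loop nodes. On such a point z_i^2 = z_i, so the affine map that
   writes z_i - c_i into the loop coordinate z_ii, for any gaps c_i >= 0, lands in the points
   of PP(G). A point z of the right-hand side is the image of its restriction to G' under this
   map with c_i = z_i - z_ii, and affine maps commute with convex hulls. Conversely
   z_ii <= z_i^2 <= z_i on the points of PP(G), and the right-hand side is convex. *)

lemma convex_hull_affine_image:
  assumes "linear f"
  shows "(\<lambda>x. a + f x) ` (convex hull S) = convex hull ((\<lambda>x. a + f x) ` S)"
  using convex_hull_linear_image[OF assms, of S] convex_hull_translation[of a "f ` S"]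
  by (metis image_image)

lemma linear_comp_right: "linear (\<lambda>w :: 'a \<Rightarrow> 'b :: real_vector. w \<circ> \<sigma>)"
  by (rule linearI) (auto simp: plus_fun_def scaleR_fun_def)

lemma linear_restrict_coords: "linear (restrict_coords C)"
  by (rule linearI) (auto simp: restrict_coords_def plus_fun_def scaleR_fun_def)

definition PP_point_of ::
    "'v set \<Rightarrow> 'v set set \<Rightarrow> 'v set \<Rightarrow> ('v \<Rightarrow> real) \<Rightarrow> ('v \<Rightarrow> real) \<Rightarrow> 'v coord \<Rightarrow> real" where
  "PP_point_of V E Lplus x l = (\<lambda>p. case p of
      Nd j \<Rightarrow> if j \<in> V then x j else 0
    | Ed e \<Rightarrow> if e \<in> E then (\<Prod>j\<in>e. x j) else 0
    | Lp j \<Rightarrow> if j \<in> Lplus then l j else 0)"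

lemma PP_point_of_coordinates:
  assumes "w \<in> PP_points V E {} Lplus"
  shows "PP_point_of V E Lplus (\<lambda>j. w (Nd j)) (\<lambda>j. w (Lp j)) = w"
proof
  fix p show "PP_point_of V E Lplus (\<lambda>j. w (Nd j)) (\<lambda>j. w (Lp j)) p = w p"
    using assms by (cases p) (auto simp: PP_point_of_def PP_points_def coords_def)
qed

lemma PP_point_of_in_PP_points:
  assumes "hypergraph_loops V E {} Lplus"
    and "\<forall>j\<in>V. 0 \<le> x j \<and> x j \<le> 1" and "\<forall>j\<in>Lplus. (x j)\<^sup>2 \<le> l j"
  shows "PP_point_of V E Lplus x l \<in> PP_points V E {} Lplus"
proof -
  have "PP_point_of V E Lplus x l (Ed e) = (\<Prod>j\<in>e. PP_point_of V E Lplus x l (Nd j))"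
    if "e \<in> E" for e
    using that assms(1) by (auto simp: PP_point_of_def hypergraph_loops_def subset_iff
        intro!: prod.cong)
  moreover have "PP_point_of V E Lplus x l p = 0" if "p \<notin> coords V E Lplus" for p
    using that by (cases p) (auto simp: PP_point_of_def coords_def)
  ultimately show ?thesis
    using assms by (auto simp: PP_points_def PP_point_of_def hypergraph_loops_def)
qed

lemma PP_point_of_affine_in_node:
  assumes "\<forall>e\<in>E. finite e"
  shows "PP_point_of V E Lplus (x(i := t)) l =
    (1 - t) *\<^sub>R PP_point_of V E Lplus (x(i := 0)) l + t *\<^sub>R PP_point_of V E Lplus (x(i := 1)) l"
proof
  fix p
  show "PP_point_of V E Lplus (x(i := t)) l p =
    ((1 - t) *\<^sub>R PP_point_of V E Lplus (x(i := 0)) l + t *\<^sub>R PP_point_of V E Lplus (x(i := 1)) l) p"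
  proof (cases p)
    case (Ed e)
    have "(\<Prod>j\<in>e. (x(i := s)) j) = (\<Prod>j\<in>e. x j)" if "i \<notin> e" for s
      using that by (intro prod.cong) auto
    then show ?thesis
      using assms Ed by (cases "i \<in> e")
        (auto simp: PP_point_of_def plus_fun_def scaleR_fun_def prod.remove algebra_simps)
  qed (auto simp: PP_point_of_def plus_fun_def scaleR_fun_def algebra_simps)
qed

definition binary_on :: "'v set \<Rightarrow> ('v coord \<Rightarrow> real) set \<Rightarrow> ('v coord \<Rightarrow> real) set" where
  "binary_on M S = {w \<in> S. \<forall>i\<in>M. w (Nd i) \<in> {0, 1}}"

lemma binary_on_subset_convex_hull_insert:
  assumes G: "hypergraph_loops V E {} Lplus" and i: "i \<in> V" "i \<notin> Lplus"
  shows "binary_on M (PP_points V E {} Lplus)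
    \<subseteq> convex hull (binary_on (insert i M) (PP_points V E {} Lplus))"
proof
  fix w assume w: "w \<in> binary_on M (PP_points V E {} Lplus)"
  define x where "x j = w (Nd j)" for j
  define l where "l j = w (Lp j)" for j
  have wP: "w \<in> PP_points V E {} Lplus" and wM: "\<forall>j\<in>M. x j \<in> {0, 1}"
    using w by (auto simp: binary_on_def x_def)
  have x01: "\<forall>j\<in>V. 0 \<le> x j \<and> x j \<le> 1" and xl: "\<forall>j\<in>Lplus. (x j)\<^sup>2 \<le> l j"
    using wP by (auto simp: PP_points_def x_def l_def)
  have fin: "\<forall>e\<in>E. finite e"
    using G by (auto simp: hypergraph_loops_def intro: finite_subset)
  \<comment> \<open>Changing x i keeps the point feasible because i carries no plus loop.\<close>
  have vertex: "PP_point_of V E Lplus (x(i := s)) l \<in> binary_on (insert i M) (PP_points V E {} Lplus)"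
    if "s \<in> {0, 1}" for s :: real
  proof -
    have "PP_point_of V E Lplus (x(i := s)) l \<in> PP_points V E {} Lplus"
      using that i x01 xl by (intro PP_point_of_in_PP_points[OF G]) auto
    then show ?thesis
      using that i wM by (auto simp: binary_on_def PP_point_of_def)
  qed
  have "w = PP_point_of V E Lplus x l"
    using PP_point_of_coordinates[OF wP] by (simp add: x_def[abs_def] l_def[abs_def])
  also have "\<dots> = PP_point_of V E Lplus (x(i := x i)) l"
    by simp
  also have "\<dots> = (1 - x i) *\<^sub>R PP_point_of V E Lplus (x(i := 0)) l
      + x i *\<^sub>R PP_point_of V E Lplus (x(i := 1)) l"
    by (rule PP_point_of_affine_in_node[OF fin])
  also have "\<dots> \<in> convex hull (binary_on (insert i M) (PP_points V E {} Lplus))"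
    using x01 i vertex by (intro convexD[OF convex_convex_hull] hull_inc) auto
  finally show "w \<in> convex hull (binary_on (insert i M) (PP_points V E {} Lplus))" .
qed

lemma PP_subset_convex_hull_binary_on:
  assumes G: "hypergraph_loops V E {} Lplus" and M: "M \<subseteq> V" "M \<inter> Lplus = {}"
  shows "PP V E {} Lplus \<subseteq> convex hull (binary_on M (PP_points V E {} Lplus))"
proof -
  have "finite M"
    using G M by (auto simp: hypergraph_loops_def intro: finite_subset)
  then have "PP_points V E {} Lplus \<subseteq> convex hull (binary_on M (PP_points V E {} Lplus))"
    using M
  proof (induction M rule: finite_induct)
    case empty
    then show ?case by (auto simp: binary_on_def intro: hull_inc)
  next
    case (insert i M)
    then have "binary_on M (PP_points V E {} Lplus)
        \<subseteq> convex hull (binary_on (insert i M) (PP_points V E {} Lplus))"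
      by (intro binary_on_subset_convex_hull_insert[OF G]) auto
    then have "convex hull (binary_on M (PP_points V E {} Lplus))
        \<subseteq> convex hull (binary_on (insert i M) (PP_points V E {} Lplus))"
      by (simp add: hull_minimal)
    with insert show ?case by auto
  qed
  then show ?thesis
    unfolding PP_def by (rule hull_minimal) simp
qed

definition lift_minus_loops ::
    "'v set \<Rightarrow> ('v \<Rightarrow> real) \<Rightarrow> ('v coord \<Rightarrow> real) \<Rightarrow> 'v coord \<Rightarrow> real" where
  "lift_minus_loops L c w = (\<lambda>p. case p of
      Lp i \<Rightarrow> if i \<in> L then w (Nd i) - c i else w p
    | _ \<Rightarrow> w p)"

lemma convex_hull_lift_minus_loops:
  "lift_minus_loops L c ` (convex hull S) = convex hull (lift_minus_loops L c ` S)"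
proof -
  define \<sigma> where "\<sigma> p = (case p of Lp i \<Rightarrow> if i \<in> L then Nd i else p | _ \<Rightarrow> p)" for p
  define a where "a p = (case p of Lp i \<Rightarrow> if i \<in> L then - c i else 0 | _ \<Rightarrow> (0 :: real))" for p
  have "lift_minus_loops L c = (\<lambda>w. a + (w \<circ> \<sigma>))"
    by (intro ext) (auto simp: lift_minus_loops_def a_def \<sigma>_def plus_fun_def split: coord.split)
  then show ?thesis
    using convex_hull_affine_image[OF linear_comp_right] by simp
qed

lemma lift_minus_loops_in_PP_points:
  assumes "w \<in> binary_on L (PP_points V E {} Lplus)" and "L \<inter> Lplus = {}"
    and "\<forall>i\<in>L. 0 \<le> c i"
  shows "lift_minus_loops L c w \<in> PP_points V E L Lplus"
proof -
  have wP: "w \<in> PP_points V E {} Lplus" and wL: "\<forall>i\<in>L. w (Nd i) \<in> {0, 1}"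
    using assms(1) by (auto simp: binary_on_def)
  have "lift_minus_loops L c w p = 0" if "p \<notin> coords V E (L \<union> Lplus)" for p
    using that wP by (cases p) (auto simp: lift_minus_loops_def coords_def PP_points_def)
  moreover have "w (Lp i) = 0" and "(w (Nd i))\<^sup>2 = w (Nd i)" if "i \<in> L" for i
    using assms(2) wP wL that by (auto simp: PP_points_def coords_def)
  ultimately show ?thesis
    using assms(2,3) wP by (auto simp: PP_points_def lift_minus_loops_def)
qed

lemma lift_minus_loops_restrict_coords:
  assumes "L \<subseteq> V" and "\<forall>p. p \<notin> coords V E (L \<union> Lplus) \<longrightarrow> z p = 0"
  shows "lift_minus_loops L (\<lambda>i. z (Nd i) - z (Lp i)) (restrict_coords (coords V E Lplus) z) = z"
proof
  fix p show "lift_minus_loops L (\<lambda>i. z (Nd i) - z (Lp i)) (restrict_coords (coords V E Lplus) z) p = z p"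
    using assms by (cases p) (auto simp: lift_minus_loops_def restrict_coords_def coords_def)
qed

lemma restrict_coords_PP_points:
  assumes "hypergraph_loops V E L Lplus" and "z \<in> PP_points V E L Lplus"
  shows "restrict_coords (coords V E Lplus) z \<in> PP_points V E {} Lplus"
  using assms unfolding hypergraph_loops_def PP_points_def restrict_coords_def
  by (auto simp: coords_def subset_iff intro!: prod.cong)

lemma PP_points_minus_loop_le_node:
  assumes "z \<in> PP_points V E L Lplus" and "i \<in> L" "i \<in> V"
  shows "z (Lp i) \<le> z (Nd i)"
proof -
  have "z (Lp i) \<le> (z (Nd i))\<^sup>2" and "0 \<le> z (Nd i)" "z (Nd i) \<le> 1"
    using assms by (auto simp: PP_points_def)
  then show ?thesis
    by (simp add: power2_eq_square mult_left_le order_trans)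
qed

lemma convex_minus_loop_relaxation:
  assumes "convex K"
  shows "convex {z :: 'v coord \<Rightarrow> real. (\<forall>p. p \<notin> C \<longrightarrow> z p = 0) \<and> restrict_coords C' z \<in> K \<and>
    (\<forall>i\<in>L. z (Lp i) \<le> z (Nd i) \<and> 0 \<le> z (Nd i) \<and> z (Nd i) \<le> 1)}"
proof -
  have "convex {z :: 'v coord \<Rightarrow> real. \<forall>p. p \<notin> C \<longrightarrow> z p = 0}"
    by (auto simp: convex_def plus_fun_def scaleR_fun_def)
  moreover have "convex (restrict_coords C' -` K)"
    by (rule convex_linear_vimage[OF linear_restrict_coords assms])
  moreover have "convex {z :: 'v coord \<Rightarrow> real.
      \<forall>i\<in>L. z (Lp i) \<le> z (Nd i) \<and> 0 \<le> z (Nd i) \<and> z (Nd i) \<le> 1}"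
    by (auto simp: convex_def plus_fun_def scaleR_fun_def
        intro: add_mono mult_left_mono convex_bound_le)
  ultimately show ?thesis
    by (auto simp: Collect_conj_eq vimage_def intro!: convex_Int)
qed

theorem lemma4:
  fixes V :: "'v set" and E :: "'v set set" and Lminus Lplus :: "'v set"
  assumes "hypergraph_loops V E Lminus Lplus"
  shows "PP V E Lminus Lplus =
    {z. (\<forall>p. p \<notin> coords V E (Lminus \<union> Lplus) \<longrightarrow> z p = 0) \<and>
        restrict_coords (coords V E Lplus) z \<in> PP V E {} Lplus \<and>
        (\<forall>i\<in>Lminus. z (Lp i) \<le> z (Nd i) \<and> 0 \<le> z (Nd i) \<and> z (Nd i) \<le> 1)}"
  (is "_ = ?T")
proof
  have G': "hypergraph_loops V E {} Lplus" and Lminus: "Lminus \<subseteq> V" "Lminus \<inter> Lplus = {}"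
    using assms by (auto simp: hypergraph_loops_def)
  show "PP V E Lminus Lplus \<subseteq> ?T"
    unfolding PP_def[of V E Lminus]
  proof (rule hull_minimal)
    show "PP_points V E Lminus Lplus \<subseteq> ?T"
    proof
      fix z assume z: "z \<in> PP_points V E Lminus Lplus"
      then have "restrict_coords (coords V E Lplus) z \<in> PP V E {} Lplus"
        unfolding PP_def by (intro hull_inc restrict_coords_PP_points[OF assms])
      moreover have "z (Lp i) \<le> z (Nd i)" if "i \<in> Lminus" for i
        using PP_points_minus_loop_le_node[OF z that] that Lminus by auto
      ultimately show "z \<in> ?T"
        using z Lminus unfolding PP_points_def by blast
    qed
    show "convex ?T"
      by (rule convex_minus_loop_relaxation) (simp add: PP_def)
  qed
  show "?T \<subseteq> PP V E Lminus Lplus"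
  proof
    fix z assume z: "z \<in> ?T"
    define B where "B = binary_on Lminus (PP_points V E {} Lplus)"
    define c where "c = (\<lambda>i. z (Nd i) - z (Lp i))"
    have "restrict_coords (coords V E Lplus) z \<in> convex hull B"
      using z PP_subset_convex_hull_binary_on[OF G' Lminus] by (auto simp: B_def)
    moreover have "z = lift_minus_loops Lminus c (restrict_coords (coords V E Lplus) z)"
      using lift_minus_loops_restrict_coords[OF Lminus(1)] z by (simp add: c_def)
    ultimately have "z \<in> lift_minus_loops Lminus c ` (convex hull B)"
      by blast
    also have "\<dots> = convex hull (lift_minus_loops Lminus c ` B)"
      by (rule convex_hull_lift_minus_loops)
    also have "\<dots> \<subseteq> PP V E Lminus Lplus"
      unfolding PP_def
    proof (rule hull_mono, rule image_subsetI)
      fix w assume "w \<in> B"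
      moreover have "\<forall>i\<in>Lminus. 0 \<le> c i"
        using z by (simp add: c_def)
      ultimately show "lift_minus_loops Lminus c w \<in> PP_points V E Lminus Lplus"
        unfolding B_def using lift_minus_loops_in_PP_points Lminus(2) by blast
    qed
    finally show "z \<in> PP V E Lminus Lplus" .
  qed
qed

end
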